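(* Let $n\geqslant 2$, let $S$ be a caterpillar species tree with $n$ leaves, and let $G_1,G_2$ be caterpillar gene trees on the same label set as $S$ such that, for all integers $i,j$, $(i,j)\in B_{G_1,S}$ if and only if $(n-1-j,\,n-1-i)\in B_{G_2,S}$. Then $(G_1,S)$ and $(G_2,S)$ have the same number of coalescent histories.
   Context: All trees are binary, rooted, leaf-labeled. A caterpillar tree with $n$ leaves is one in which some internal node is descended from all other internal nodes. Its canonical label vector $(x_1,\dots,x_n)$ has $x_1,x_2$ the labels of the two cherry leaves and, for $3\leqslant i\leqslant n$, $x_i$ the label of the leaf separated from the root by $n-i+1$ edges. Internal nodes are numbered $1,\dots,n-1$ from the cherry to the root (node $i$ has descendant leaves $x_1,\dots,x_{i+1}$), and internal edge $i$ is the edge immediately above node $i$, including an extra edge $n-1$ above the root. A coalescent history for a gene tree $G$ and species tree $S$ on the same label set is a map $h$ from internal nodes of $G$ to internal edges of $S$ such that (1) every label of a leaf below node $v$ of $G$ labels a leaf of $S$ below edge $h(v)$, and (2) if $v_2$ is descended from $v_1$ in $G$ then $h(v_2)$ is descended from $h(v_1)$ in $S$ (objects are descended from themselves). For caterpillars $G,S$ with canonical vectors $\mathbf g,\mathbf s$, let $\sigma(x)$ be the index of label $x$ in $\mathbf s$, $F(j)=\max\{\sigma(g_1),\dots,\sigma(g_{j+1})\}-1$ for $1\leqslant j\leqslant n-1$, and $B_{G,S}=\{(i,j)\in\mathbb Z^2:1\leqslant j\leqslant i\leqslant n-1,\ i<F(j)\}$. *)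

theory Defs
  imports Main "HOL-Library.FuncSet"
begin

text \<open>A caterpillar tree with n leaves is represented by its canonical label vector
  x = [x_1,...,x_n] (a list, 0-based in Isabelle: x_k = x ! (k-1)) of distinct labels.\<close>

definition caterpillar :: "nat \<Rightarrow> 'a list \<Rightarrow> bool" where
  "caterpillar n x \<longleftrightarrow> length x = n \<and> distinct x"

text \<open>Labels of the leaves below internal node v (1 \<le> v \<le> n-1): x_1,...,x_{v+1}.
  Internal edge e lies immediately above node e, so the leaves below edge e are those
  below node e.\<close>

definition leaves_below :: "'a list \<Rightarrow> nat \<Rightarrow> 'a set" where
  "leaves_below x v = set (take (v + 1) x)"

text \<open>In a caterpillar, node v2 is descended from node v1 iff v2 \<le> v1; likewise for
  edges (including the extra root edge n-1).\<close>

definition node_desc :: "nat \<Rightarrow> nat \<Rightarrow> bool" where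
  "node_desc v2 v1 \<longleftrightarrow> v2 \<le> v1"

definition edge_desc :: "nat \<Rightarrow> nat \<Rightarrow> bool" where
  "edge_desc e2 e1 \<longleftrightarrow> e2 \<le> e1"

definition coal_history :: "'a list \<Rightarrow> 'a list \<Rightarrow> (nat \<Rightarrow> nat) \<Rightarrow> bool" where
  "coal_history g s h \<longleftrightarrow>
     (\<forall>v\<in>{1..length g - 1}. h v \<in> {1..length s - 1}) \<and>
     (\<forall>v\<in>{1..length g - 1}. leaves_below g v \<subseteq> leaves_below s (h v)) \<and>
     (\<forall>v1\<in>{1..length g - 1}. \<forall>v2\<in>{1..length g - 1}.
         node_desc v2 v1 \<longrightarrow> edge_desc (h v2) (h v1))"

definition num_coal_histories :: "'a list \<Rightarrow> 'a list \<Rightarrow> nat" where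
  "num_coal_histories g s =
     card {h \<in> {1..length g - 1} \<rightarrow>\<^sub>E {1..length s - 1}. coal_history g s h}"

definition sigma :: "'a list \<Rightarrow> 'a \<Rightarrow> nat" where
  "sigma s x = (THE i. i < length s \<and> s ! i = x) + 1"

definition Ffun :: "'a list \<Rightarrow> 'a list \<Rightarrow> nat \<Rightarrow> nat" where
  "Ffun g s j = Max ((\<lambda>k. sigma s (g ! (k - 1))) ` {1..j+1}) - 1"

definition Bset :: "'a list \<Rightarrow> 'a list \<Rightarrow> (int \<times> int) set" where
  "Bset g s = {(i, j). 1 \<le> j \<and> j \<le> i \<and> i \<le> int (length g) - 1
                        \<and> i < int (Ffun g s (nat j))}"

end

theory Submission
  imports Defs
begin

text \<open>Encode a coalescent history h of two caterpillars by its region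
  {(i, j). j \<le> i < h j}: the pairs with node j of G mapped strictly above edge i of S.
  Monotonicity of h makes the region a staircase in the triangle 1 \<le> j \<le> i \<le> n - 2,
  i.e. closed under moving towards the diagonal in either coordinate, and each staircase
  comes from exactly one h with j \<le> h j. The leaf condition at node j says h j \<ge> F j, i.e.
  the region contains the pairs of B_{G,S} with second coordinate j. Hence the histories of
  (G, S) are counted by the staircases containing B_{G,S}, and the reflection
  (i, j) \<mapsto> (n - 1 - j, n - 1 - i) in the anti-diagonal maps staircases to staircases and,
  by hypothesis, those containing B_{G1,S} onto those containing B_{G2,S}.\<close>

definition triangle :: "int \<Rightarrow> (int \<times> int) set" where
  "triangle M = {(i, j). 1 \<le> j \<and> j \<le> i \<and> i \<le> M - 1}"

definition staircase :: "int \<Rightarrow> (int \<times> int) set \<Rightarrow> bool" where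
  "staircase M X \<longleftrightarrow> X \<subseteq> triangle M \<and>
     (\<forall>i j i'. (i, j) \<in> X \<longrightarrow> j \<le> i' \<longrightarrow> i' \<le> i \<longrightarrow> (i', j) \<in> X) \<and>
     (\<forall>i j j'. (i, j) \<in> X \<longrightarrow> j \<le> j' \<longrightarrow> j' \<le> i \<longrightarrow> (i, j') \<in> X)"

definition antitranspose :: "int \<Rightarrow> int \<times> int \<Rightarrow> int \<times> int" where
  "antitranspose M = (\<lambda>(i, j). (M - j, M - i))"

lemma antitranspose_Pair [simp]: "antitranspose M (i, j) = (M - j, M - i)"
  by (simp add: antitranspose_def)

lemma antitranspose_antitranspose [simp]: "antitranspose M (antitranspose M p) = p"
  by (cases p) simp

lemma staircase_antitranspose_vimage:
  assumes "staircase M X"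
  shows "staircase M (antitranspose M -` X)"
proof -
  have X: "X \<subseteq> triangle M"
    and down: "\<And>i j i'. (i, j) \<in> X \<Longrightarrow> j \<le> i' \<Longrightarrow> i' \<le> i \<Longrightarrow> (i', j) \<in> X"
    and right: "\<And>i j j'. (i, j) \<in> X \<Longrightarrow> j \<le> j' \<Longrightarrow> j' \<le> i \<Longrightarrow> (i, j') \<in> X"
    using assms unfolding staircase_def by blast+
  have "(i, j) \<in> triangle M" if "(M - j, M - i) \<in> X" for i j
  proof -
    have "(M - j, M - i) \<in> triangle M" using X that by blast
    then show ?thesis by (simp add: triangle_def)
  qed
  then have "antitranspose M -` X \<subseteq> triangle M" by auto
  moreover have "(i', j) \<in> antitranspose M -` X"
    if "(i, j) \<in> antitranspose M -` X" "j \<le> i'" "i' \<le> i" for i j i'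
    using right[of "M - j" "M - i" "M - i'"] that by simp
  moreover have "(i, j') \<in> antitranspose M -` X"
    if "(i, j) \<in> antitranspose M -` X" "j \<le> j'" "j' \<le> i" for i j j'
    using down[of "M - j" "M - i" "M - j'"] that by simp
  ultimately show ?thesis
    unfolding staircase_def by blast
qed

lemma card_staircases_containing_antitranspose:
  assumes "B1 = antitranspose M -` B2"
  shows "card {X. staircase M X \<and> B1 \<subseteq> X} = card {X. staircase M X \<and> B2 \<subseteq> X}"
proof (rule bij_betw_same_card, rule bij_betw_byWitness[where f' = "vimage (antitranspose M)"])
  show "vimage (antitranspose M) ` {X. staircase M X \<and> B1 \<subseteq> X} \<subseteq> {X. staircase M X \<and> B2 \<subseteq> X}"
    using assms by (force intro: staircase_antitranspose_vimage)
  show "vimage (antitranspose M) ` {X. staircase M X \<and> B2 \<subseteq> X} \<subseteq> {X. staircase M X \<and> B1 \<subseteq> X}"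
    using assms by (auto intro: staircase_antitranspose_vimage)
qed auto

definition history_region :: "nat \<Rightarrow> (nat \<Rightarrow> nat) \<Rightarrow> (int \<times> int) set" where
  "history_region m h = {(i, j). 1 \<le> j \<and> j \<le> int m \<and> j \<le> i \<and> i < int (h (nat j))}"

definition extensive_mono_maps :: "nat \<Rightarrow> (nat \<Rightarrow> nat) set" where
  "extensive_mono_maps m = {h \<in> {1..m} \<rightarrow>\<^sub>E {1..m}. (\<forall>v\<in>{1..m}. v \<le> h v) \<and> mono_on {1..m} h}"

lemma staircase_history_region:
  assumes "h \<in> {1..m} \<rightarrow> {1..m}" and "mono_on {1..m} h"
  shows "staircase (int m) (history_region m h)"
proof -
  have "history_region m h \<subseteq> triangle (int m)"
  proof clarify
    fix i j assume ij: "(i, j) \<in> history_region m h"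
    then have "h (nat j) \<le> m" using assms(1) by (force simp: history_region_def)
    then show "(i, j) \<in> triangle (int m)" using ij by (auto simp: history_region_def triangle_def)
  qed
  moreover have "(i, j') \<in> history_region m h"
    if ij: "(i, j) \<in> history_region m h" and "j \<le> j'" "j' \<le> i" for i j j'
  proof -
    have j: "nat j \<in> {1..m}" "i < int (h (nat j))" using ij by (auto simp: history_region_def)
    then have "j' \<le> int m" using assms(1) \<open>j' \<le> i\<close> by force
    then have "h (nat j) \<le> h (nat j')"
      using j \<open>j \<le> j'\<close> by (intro mono_onD[OF assms(2)]) auto
    then show ?thesis using ij that \<open>j' \<le> int m\<close> by (auto simp: history_region_def)
  qed
  moreover have "(i', j) \<in> history_region m h"
    if "(i, j) \<in> history_region m h" and "j \<le> i'" "i' \<le> i" for i j i'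
    using that by (auto simp: history_region_def)
  ultimately show ?thesis
    unfolding staircase_def by blast
qed

lemma inj_on_history_region:
  "inj_on (history_region m) {h \<in> {1..m} \<rightarrow>\<^sub>E UNIV. \<forall>v\<in>{1..m}. v \<le> h v}"
proof (rule inj_onI)
  fix h1 h2
  assume h1: "h1 \<in> {h \<in> {1..m} \<rightarrow>\<^sub>E UNIV. \<forall>v\<in>{1..m}. v \<le> h v}"
    and h2: "h2 \<in> {h \<in> {1..m} \<rightarrow>\<^sub>E UNIV. \<forall>v\<in>{1..m}. v \<le> h v}"
    and eq: "history_region m h1 = history_region m h2"
  have not_less: "\<not> h v < h' v"
    if "v \<in> {1..m}" "v \<le> h v" "history_region m h = history_region m h'" for h h' v
  proof
    assume "h v < h' v"
    then have "(int (h v), int v) \<in> history_region m h'" using that by (auto simp: history_region_def)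
    then have "(int (h v), int v) \<in> history_region m h" using that(3) by simp
    then show False by (simp add: history_region_def)
  qed
  have "h1 v = h2 v" if "v \<in> {1..m}" for v
    using not_less[of v h1 h2] not_less[of v h2 h1] that h1 h2 eq by auto
  then show "h1 = h2"
    using h1 h2 by (intro PiE_ext[of h1 "{1..m}" "\<lambda>_. UNIV" h2]) auto
qed

lemma staircase_eq_history_region:
  assumes "staircase (int m) X"
  obtains h where "h \<in> extensive_mono_maps m" and "history_region m h = X"
proof -
  have X: "X \<subseteq> triangle (int m)"
    and down: "\<And>i j i'. (i, j) \<in> X \<Longrightarrow> j \<le> i' \<Longrightarrow> i' \<le> i \<Longrightarrow> (i', j) \<in> X"
    and right: "\<And>i j j'. (i, j) \<in> X \<Longrightarrow> j \<le> j' \<Longrightarrow> j' \<le> i \<Longrightarrow> (i, j') \<in> X"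
    using assms unfolding staircase_def by blast+
  \<comment> \<open>column v of X is the interval [v, h v) of rows\<close>
  define h where "h v = (if v \<in> {1..m} then LEAST k. v \<le> k \<and> (int k, int v) \<notin> X else undefined)" for v
  have witness: "v \<le> m \<and> (int m, int v) \<notin> X" if "v \<in> {1..m}" for v
    using that X by (auto simp: triangle_def)
  have h_missing: "v \<le> h v \<and> (int (h v), int v) \<notin> X" if "v \<in> {1..m}" for v
    using that LeastI[of "\<lambda>k. v \<le> k \<and> (int k, int v) \<notin> X", OF witness[OF that]] by (simp add: h_def)
  have h_le: "h v \<le> m" if "v \<in> {1..m}" for v
    using that Least_le[of "\<lambda>k. v \<le> k \<and> (int k, int v) \<notin> X", OF witness[OF that]] by (simp add: h_def)
  have below_h: "(int k, int v) \<in> X" if "v \<in> {1..m}" "v \<le> k" "k < h v" for v k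
    using that not_less_Least[of k "\<lambda>k. v \<le> k \<and> (int k, int v) \<notin> X"] by (auto simp: h_def)
  have "h \<in> {1..m} \<rightarrow>\<^sub>E {1..m}"
    using h_missing h_le by (force simp: h_def)
  moreover have "mono_on {1..m} h"
  proof (rule mono_onI, rule ccontr)
    fix v w assume vw: "v \<in> {1..m}" "w \<in> {1..m}" "v \<le> w" and "\<not> h v \<le> h w"
    then have "(int (h w), int v) \<in> X" using below_h[of v "h w"] h_missing[of w] by auto
    then have "(int (h w), int w) \<in> X" using right vw h_missing[of w] by auto
    then show False using h_missing[of w] vw by auto
  qed
  ultimately have "h \<in> extensive_mono_maps m"
    using h_missing by (simp add: extensive_mono_maps_def)
  moreover have "history_region m h = X"
  proof (intro equalityI subsetI; clarify)
    fix i j assume "(i, j) \<in> history_region m h"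
    then have "1 \<le> j" "j \<le> i" "j \<le> int m" "i < int (h (nat j))" by (auto simp: history_region_def)
    then have "(int (nat i), int (nat j)) \<in> X" by (intro below_h) auto
    then show "(i, j) \<in> X" using \<open>1 \<le> j\<close> \<open>j \<le> i\<close> by simp
  next
    fix i j assume ij: "(i, j) \<in> X"
    then have ij': "1 \<le> j" "j \<le> i" "i \<le> int m - 1" using X by (auto simp: triangle_def)
    then have v: "nat j \<in> {1..m}" by auto
    have "j \<le> int (h (nat j))" using h_missing[OF v] by (simp add: nat_le_iff)
    then have "\<not> int (h (nat j)) \<le> i"
      using down[OF ij, of "int (h (nat j))"] h_missing[OF v] ij'(1) by auto
    then show "(i, j) \<in> history_region m h" using ij' by (auto simp: history_region_def)
  qed
  ultimately show ?thesis by (rule that)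
qed

lemma bij_betw_history_region:
  "bij_betw (history_region m) (extensive_mono_maps m) {X. staircase (int m) X}"
proof (rule bij_betw_imageI)
  show "inj_on (history_region m) (extensive_mono_maps m)"
    by (rule inj_on_subset[OF inj_on_history_region]) (auto simp: extensive_mono_maps_def)
  show "history_region m ` extensive_mono_maps m = {X. staircase (int m) X}"
  proof (intro equalityI subsetI)
    fix X assume "X \<in> {X. staircase (int m) X}"
    then obtain h where "h \<in> extensive_mono_maps m" and "history_region m h = X"
      using staircase_eq_history_region by blast
    then show "X \<in> history_region m ` extensive_mono_maps m" by blast
  qed (auto simp: extensive_mono_maps_def PiE_iff intro: staircase_history_region)
qed

lemma card_histories_containing_eq_card_staircases:
  "card {h \<in> extensive_mono_maps m. B \<subseteq> history_region m h} =
   card {X. staircase (int m) X \<and> B \<subseteq> X}"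
proof -
  have "bij_betw (history_region m) {h \<in> extensive_mono_maps m. B \<subseteq> history_region m h}
      {X \<in> {X. staircase (int m) X}. B \<subseteq> X}"
    by (rule bij_betw_Collect[OF bij_betw_history_region]) simp
  then show ?thesis
    by (simp add: bij_betw_same_card)
qed

lemma sigma_nth: "distinct s \<Longrightarrow> p < length s \<Longrightarrow> sigma s (s ! p) = p + 1"
  unfolding sigma_def by (subst the_equality[of _ p]) (auto simp: nth_eq_iff_index_eq)

lemma mem_leaves_below_iff:
  assumes "distinct s"
  shows "x \<in> leaves_below s e \<longleftrightarrow> x \<in> set s \<and> sigma s x \<le> e + 1"
proof -
  have "x \<in> leaves_below s e \<longleftrightarrow> (\<exists>p < length s. p < e + 1 \<and> s ! p = x)"
    by (auto simp: leaves_below_def in_set_conv_nth)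
  also have "\<dots> \<longleftrightarrow> x \<in> set s \<and> sigma s x \<le> e + 1"
    using sigma_nth[OF assms] by (auto simp: in_set_conv_nth)
  finally show ?thesis .
qed

lemma Ffun_eq_Max_leaves_below:
  assumes "v < length g"
  shows "Ffun g s v = Max (sigma s ` leaves_below g v) - 1"
proof -
  have "(\<lambda>k. sigma s (g ! (k - 1))) ` {1..v+1} = sigma s ` (!) g ` {0..<v+1}"
    by (force simp: image_iff)
  then show ?thesis
    using assms by (simp add: Ffun_def leaves_below_def nth_image)
qed

lemma leaves_below_subset_iff_Ffun_le:
  assumes "distinct s" and "set g = set s" and "v < length g"
  shows "leaves_below g v \<subseteq> leaves_below s e \<longleftrightarrow> Ffun g s v \<le> e"
proof -
  have "leaves_below g v \<subseteq> set s"
    using assms(2) set_take_subset by (metis leaves_below_def)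
  then have "leaves_below g v \<subseteq> leaves_below s e \<longleftrightarrow> (\<forall>x\<in>leaves_below g v. sigma s x \<le> e + 1)"
    using mem_leaves_below_iff[OF assms(1)] by blast
  also have "\<dots> \<longleftrightarrow> Max (sigma s ` leaves_below g v) \<le> e + 1"
    using assms(3) by (auto simp: leaves_below_def take_Suc_conv_app_nth)
  also have "\<dots> \<longleftrightarrow> Ffun g s v \<le> e"
    using Ffun_eq_Max_leaves_below[OF assms(3)] by (simp add: le_diff_conv)
  finally show ?thesis .
qed

lemma le_Ffun:
  assumes "distinct s" and "distinct g" and "set g = set s" and "v < length g"
  shows "v \<le> Ffun g s v"
proof -
  have "leaves_below g v \<subseteq> leaves_below s (Ffun g s v)"
    using leaves_below_subset_iff_Ffun_le[OF assms(1,3,4)] by simp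
  then have "card (leaves_below g v) \<le> card (leaves_below s (Ffun g s v))"
    by (simp add: card_mono leaves_below_def)
  moreover have "card (leaves_below g v) = v + 1"
    using assms(2,4) by (simp add: leaves_below_def distinct_card)
  moreover have "card (leaves_below s (Ffun g s v)) \<le> Ffun g s v + 1"
    using card_length[of "take (Ffun g s v + 1) s"] by (simp add: leaves_below_def)
  ultimately show ?thesis by simp
qed

lemma Ffun_le_iff_Bset_subset_history_region:
  assumes "distinct s" and "distinct g" and "set g = set s"
    and "h \<in> {1..length g - 1} \<rightarrow> {1..length g - 1}"
  shows "(\<forall>v\<in>{1..length g - 1}. Ffun g s v \<le> h v) \<longleftrightarrow>
    (\<forall>v\<in>{1..length g - 1}. v \<le> h v) \<and> Bset g s \<subseteq> history_region (length g - 1) h"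
proof (intro iffI conjI ballI subsetI; clarify?)
  assume F: "\<forall>v\<in>{1..length g - 1}. Ffun g s v \<le> h v"
  show "v \<le> h v" if "v \<in> {1..length g - 1}" for v
    using le_Ffun[OF assms(1-3), of v] F that by force
  fix i j assume "(i, j) \<in> Bset g s"
  then have "1 \<le> j" "j \<le> i" "i \<le> int (length g) - 1" "i < int (Ffun g s (nat j))"
    by (auto simp: Bset_def)
  moreover from calculation have "nat j \<in> {1..length g - 1}" by auto
  then have "Ffun g s (nat j) \<le> h (nat j)" using F by blast
  ultimately show "(i, j) \<in> history_region (length g - 1) h"
    by (auto simp: history_region_def)
next
  fix v assume v: "v \<in> {1..length g - 1}"
    and le: "\<forall>v\<in>{1..length g - 1}. v \<le> h v"
    and B: "Bset g s \<subseteq> history_region (length g - 1) h"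
  show "Ffun g s v \<le> h v"
  proof (rule ccontr)
    assume "\<not> Ffun g s v \<le> h v"
    then have "(int (h v), int v) \<in> Bset g s"
      using v le assms(4) by (force simp: Bset_def)
    then show False using B by (auto simp: history_region_def)
  qed
qed

lemma coal_history_iff:
  assumes "caterpillar n s" and "caterpillar n g" and "set g = set s"
    and "h \<in> {1..n-1} \<rightarrow> {1..n-1}"
  shows "coal_history g s h \<longleftrightarrow>
    (\<forall>v\<in>{1..n-1}. v \<le> h v) \<and> mono_on {1..n-1} h \<and> Bset g s \<subseteq> history_region (n - 1) h"
proof -
  have len: "length s = n" "length g = n" and dist: "distinct s" "distinct g"
    using assms(1,2) by (auto simp: caterpillar_def)
  have leaves: "leaves_below g v \<subseteq> leaves_below s (h v) \<longleftrightarrow> Ffun g s v \<le> h v"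
    if "v \<in> {1..n-1}" for v
  proof -
    have "v < length g" using that len by auto
    then show ?thesis by (rule leaves_below_subset_iff_Ffun_le[OF dist(1) assms(3)])
  qed
  have "coal_history g s h \<longleftrightarrow> (\<forall>v\<in>{1..n-1}. Ffun g s v \<le> h v) \<and> mono_on {1..n-1} h"
    using assms(4) len leaves
    by (auto simp: coal_history_def node_desc_def edge_desc_def mono_on_def monotone_on_def)
  also have "\<dots> \<longleftrightarrow>
      (\<forall>v\<in>{1..n-1}. v \<le> h v) \<and> Bset g s \<subseteq> history_region (n - 1) h \<and> mono_on {1..n-1} h"
    using Ffun_le_iff_Bset_subset_history_region[OF dist assms(3)] assms(4) len by simp
  finally show ?thesis by blast
qed

lemma num_coal_histories_eq_card_staircases:
  assumes "caterpillar n s" and "caterpillar n g" and "set g = set s"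
  shows "num_coal_histories g s = card {X. staircase (int (n - 1)) X \<and> Bset g s \<subseteq> X}"
proof -
  have "{h \<in> {1..length g - 1} \<rightarrow>\<^sub>E {1..length s - 1}. coal_history g s h} =
      {h \<in> extensive_mono_maps (n - 1). Bset g s \<subseteq> history_region (n - 1) h}"
    using coal_history_iff[OF assms] assms(1,2) by (auto simp: caterpillar_def PiE_iff extensive_mono_maps_def)
  then show ?thesis
    unfolding num_coal_histories_def by (simp only: card_histories_containing_eq_card_staircases)
qed

theorem lemma2:
  fixes n :: nat and s g1 g2 :: "'a list"
  assumes "n \<ge> 2"
    and "caterpillar n s" and "caterpillar n g1" and "caterpillar n g2"
    and "set g1 = set s" and "set g2 = set s"
    and "\<forall>i j :: int. (i, j) \<in> Bset g1 s \<longleftrightarrow> (int n - 1 - j, int n - 1 - i) \<in> Bset g2 s"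
  shows "num_coal_histories g1 s = num_coal_histories g2 s"
proof -
  have "int (n - 1) = int n - 1" using assms(1) by simp
  then have "Bset g1 s = antitranspose (int (n - 1)) -` Bset g2 s"
    using assms(7) by (auto simp: antitranspose_def)
  then show ?thesis
    using num_coal_histories_eq_card_staircases[OF assms(2,3,5)]
      num_coal_histories_eq_card_staircases[OF assms(2,4,6)]
      card_staircases_containing_antitranspose by simp
qed

end
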